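(* Let $C\in M_n(\mathbb{C})$ be a contraction, $D=I-C^*C$, $d=\operatorname{rank}D$, and let $T_j$ be its partial isometry tower. Define polynomials $\phi_{-1}=0$, $\phi_0=1$, $\phi_{m+1}(z,r)=z\phi_m(z,r)-r^2\phi_{m-1}(z,r)$. Then for every $j\ge1$, every $\theta\in\mathbb{R}$ and all $z,r\in\mathbb{C}$ with $\phi_j(z,r)\ne0$, $$\det\bigl(zI-2rH_{T_j}(\theta)\bigr)=\phi_j(z,r)^d\det\!\Bigl(zI-2rH_C(\theta)-r^2\frac{\phi_{j-1}(z,r)}{\phi_j(z,r)}D\Bigr),$$ where $2rH_X(\theta)$ means $re^{-i\theta}X+re^{i\theta}X^*$. Equivalently, writing $z=2ru$ with $r\neq 0$ and $U_k$ for the Chebyshev polynomials of the second kind, $$\det\bigl(zI-2rH_{T_j}(\theta)\bigr)=(2r)^n r^{jd}U_j(u)^d\det\bigl(uI-H_C(\theta)-\tau_j(u)D\bigr),\qquad \tau_j(u)=\frac{U_{j-1}(u)}{2U_j(u)}.$$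
   Context: For $X\in M_n(\mathbb{C})$ and $\theta\in\mathbb{R}$, $H_X(\theta):=\operatorname{Re}(e^{-i\theta}X)=\frac12(e^{-i\theta}X+e^{i\theta}X^* )$. A contraction is a matrix with $\|C\|\le 1$. For a contraction $C$, $D_C=I-C^*C$, $d=\operatorname{rank}D_C$, $B_C$ is a $d\times n$ matrix of full row rank with $B_C^*B_C=D_C$ (the matrix of $D_C^{1/2}$ restricted to $\operatorname{Im}D_C$, zero on its orthogonal complement), $\mathcal{A}(C)=\begin{bmatrix}0&B_C\\0&C\end{bmatrix}$, and the partial isometry tower is $T_0=C$, $T_{j+1}=\mathcal{A}(T_j)$. Chebyshev polynomials of the second kind: $U_{-1}=0$, $U_0=1$, $U_{k+1}(u)=2uU_k(u)-U_{k-1}(u)$. *)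

theory Defs
  imports "Jordan_Normal_Form.Schur_Decomposition" "Jordan_Normal_Form.DL_Rank"
begin

definition herm_part :: "complex mat \<Rightarrow> real \<Rightarrow> complex mat" where
  "herm_part X \<theta> = (1/2 :: complex) \<cdot>\<^sub>m
     (exp (- (\<i> * complex_of_real \<theta>)) \<cdot>\<^sub>m X + exp (\<i> * complex_of_real \<theta>) \<cdot>\<^sub>m mat_adjoint X)"

definition vnorm2 :: "complex vec \<Rightarrow> real" where
  "vnorm2 v = (\<Sum>i<dim_vec v. (cmod (v $ i))^2)"

definition contraction :: "nat \<Rightarrow> complex mat \<Rightarrow> bool" where
  "contraction n C \<longleftrightarrow> C \<in> carrier_mat n n \<and>
     (\<forall>v \<in> carrier_vec n. vnorm2 (C *\<^sub>v v) \<le> vnorm2 v)"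

definition defect :: "complex mat \<Rightarrow> complex mat" where
  "defect C = 1\<^sub>m (dim_col C) - mat_adjoint C * C"

definition mrank :: "complex mat \<Rightarrow> nat" where
  "mrank A = vec_space.rank (dim_row A) A"

definition is_B :: "complex mat \<Rightarrow> complex mat \<Rightarrow> bool" where
  "is_B C B \<longleftrightarrow> B \<in> carrier_mat (mrank (defect C)) (dim_col C) \<and>
     mrank B = dim_row B \<and> mat_adjoint B * B = defect C"

definition A_op :: "complex mat \<Rightarrow> complex mat \<Rightarrow> complex mat" where
  "A_op C B = four_block_mat (0\<^sub>m (dim_row B) (dim_row B)) B (0\<^sub>m (dim_row C) (dim_row B)) C"

definition is_tower :: "complex mat \<Rightarrow> (nat \<Rightarrow> complex mat) \<Rightarrow> bool" where
  "is_tower C T \<longleftrightarrow> T 0 = C \<and>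
     (\<forall>j. \<exists>B. is_B (T j) B \<and> T (Suc j) = A_op (T j) B)"

(* phi_m(z,r), with phi_{-1} = 0, phi_0 = 1 (so phi_1 = z) *)
fun phi :: "nat \<Rightarrow> complex \<Rightarrow> complex \<Rightarrow> complex" where
  "phi 0 z r = 1"
| "phi (Suc 0) z r = z"
| "phi (Suc (Suc m)) z r = z * phi (Suc m) z r - r^2 * phi m z r"

(* Chebyshev polynomials of the second kind, U_{-1} = 0, U_0 = 1 (so U_1 = 2u) *)
fun chebU :: "nat \<Rightarrow> complex \<Rightarrow> complex" where
  "chebU 0 u = 1"
| "chebU (Suc 0) u = 2 * u"
| "chebU (Suc (Suc m)) u = 2 * u * chebU (Suc m) u - chebU m u"

end

theory Submission
  imports Defs
begin

(* Write D_X for the defect of X and consider the shifted determinant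
   det (z I - 2r H_X(theta) - s D_X). One step X' = A(X) = [[0, B], [0, X]] of the tower has
   defect diag(I_d, 0), because B^* B + X^* X = I; so the shifted matrix of X' is
   [[(z - s) I, -r e^{-i theta} B], [-r e^{i theta} B^*, z I - 2r H_X]], and a Schur complement gives
   det (z I - 2r H_X' - s D_X') = (z - s)^d det (z I - 2r H_X - r^2/(z - s) D_X).
   Descending from T_j with s = 0, the shifts run through the continued fraction
   s_0 = 0, s_(m+1) = r^2/(z - s_m), i.e. s_m = r^2 phi_(m-1)/phi_m, and the prefactors z - s_m
   telescope to phi_j. This needs phi_0, ..., phi_j to be nonzero at z; since both sides are
   continuous in z wherever phi_j does not vanish and only finitely many z are excluded, the identity
   extends. The Chebyshev form is the substitution z = 2ru, as phi_m(2ru, r) = r^m U_m(u). *)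

lemma dim_row_mat_adjoint [simp]: "dim_row (mat_adjoint A) = dim_col A"
  and dim_col_mat_adjoint [simp]: "dim_col (mat_adjoint A) = dim_row A"
  unfolding mat_adjoint_def by auto

lemma mat_adjoint_carrier_mat [simp]: "A \<in> carrier_mat m n \<Longrightarrow> mat_adjoint A \<in> carrier_mat n m"
  by (intro carrier_matI) simp_all

lemma index_mat_adjoint [simp]:
  "i < dim_col A \<Longrightarrow> j < dim_row A \<Longrightarrow> mat_adjoint A $$ (i, j) = cnj (A $$ (j, i))"
  unfolding mat_adjoint_def by (auto simp: mat_of_rows_def)

lemma dim_row_herm_part [simp]: "dim_row (herm_part X \<theta>) = dim_col X"
  and dim_col_herm_part [simp]: "dim_col (herm_part X \<theta>) = dim_row X"
  unfolding herm_part_def by simp_all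

lemma dim_row_defect [simp]: "dim_row (defect X) = dim_col X"
  and dim_col_defect [simp]: "dim_col (defect X) = dim_col X"
  unfolding defect_def by simp_all

lemma herm_part_carrier_mat [simp]: "X \<in> carrier_mat n n \<Longrightarrow> herm_part X \<theta> \<in> carrier_mat n n"
  unfolding herm_part_def by (intro carrier_matI) simp_all

lemma defect_carrier_mat [simp]: "X \<in> carrier_mat n n \<Longrightarrow> defect X \<in> carrier_mat n n"
  unfolding defect_def by (intro carrier_matI) simp_all

lemma col_four_block_one_zero:
  assumes "i < p + q"
  shows "col (four_block_mat (1\<^sub>m p) (0\<^sub>m p q) (0\<^sub>m q p) (0\<^sub>m q q)) i
    = (if i < p then unit_vec (p + q) i else (0\<^sub>v (p + q) :: 'a :: zero_neq_one vec))"
  by (rule eq_vecI) (use assms in \<open>auto simp: unit_vec_def\<close>)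

lemma (in vec_space) rank_eq_card_cols:
  assumes A: "A \<in> carrier_mat n nc" and U: "lin_indpt U" "U \<subseteq> set (cols A)"
    and cols: "set (cols A) \<subseteq> insert (0\<^sub>v n) U"
  shows "rank A = card U"
proof -
  have "T = U" if "U \<subseteq> T" "T \<subseteq> set (cols A)" "lin_indpt T" for T
  proof -
    have "T \<subseteq> carrier_vec n"
      using that(2) cols_dim[of A] A by auto
    then have "0\<^sub>v n \<notin> T"
      using zero_nin_lin_indpt that(3) class_semiring.one_zeroI by auto
    then show ?thesis
      using that(1,2) cols by blast
  qed
  then have "maximal U (\<lambda>T. T \<subseteq> set (cols A) \<and> lin_indpt T)"
    using U unfolding maximal_def by blast
  then show ?thesis
    by (rule rank_card_indpt[OF A])
qed

lemma mrank_four_block_one_zero: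
  "mrank (four_block_mat (1\<^sub>m p) (0\<^sub>m p q) (0\<^sub>m q p) (0\<^sub>m q q)) = p"
proof -
  let ?E = "four_block_mat (1\<^sub>m p) (0\<^sub>m p q) (0\<^sub>m q p) (0\<^sub>m q q) :: complex mat"
  interpret vec_space "TYPE(complex)" "p + q" .
  define U where "U = (unit_vec (p + q) ` {..<p} :: complex vec set)"
  have cols: "set (cols ?E) = col ?E ` {..<p + q}"
    unfolding cols_def by auto
  have U: "U = col ?E ` {..<p}"
    unfolding U_def by (rule image_cong) (simp_all add: col_four_block_one_zero)
  have "col ?E ` {p..<p + q} \<subseteq> {0\<^sub>v (p + q)}"
    by (auto simp: col_four_block_one_zero)
  then have zero_cols: "set (cols ?E) \<subseteq> insert (0\<^sub>v (p + q)) U"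
    unfolding cols U by (auto simp: image_subset_iff not_less)
  have "lin_indpt (set (unit_vecs (p + q)))"
    using unit_vecs_basis unfolding basis_def by blast
  moreover have "U \<subseteq> set (unit_vecs (p + q))"
    unfolding U_def unit_vecs_def by auto
  ultimately have "lin_indpt U"
    by (rule subset_li_is_li)
  moreover have "U \<subseteq> set (cols ?E)"
    unfolding cols U by auto
  ultimately have "rank ?E = card U"
    using zero_cols by (intro rank_eq_card_cols) auto
  also have "card U = p"
    unfolding U_def by (subst card_image) (auto simp: inj_on_def)
  finally show ?thesis
    unfolding mrank_def by simp
qed

lemma det_four_block_mat_scalar_corner:
  fixes B C D :: "'a :: field mat"
  assumes c: "c \<noteq> 0" and B: "B \<in> carrier_mat p q" and C: "C \<in> carrier_mat q p"
    and D: "D \<in> carrier_mat q q"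
  shows "det (four_block_mat (c \<cdot>\<^sub>m 1\<^sub>m p) B C D) = c ^ p * det (D - (1 / c) \<cdot>\<^sub>m (C * B))"
proof -
  define M where "M = four_block_mat (c \<cdot>\<^sub>m 1\<^sub>m p) B C D"
  define R where "R = four_block_mat (1\<^sub>m p) ((- (1 / c)) \<cdot>\<^sub>m B) (0\<^sub>m q p) (1\<^sub>m q)"
  have M: "M \<in> carrier_mat (p + q) (p + q)" and R: "R \<in> carrier_mat (p + q) (p + q)"
    unfolding M_def R_def using B D by auto
  have "c \<cdot>\<^sub>m 1\<^sub>m p * ((- (1 / c)) \<cdot>\<^sub>m B) + B * 1\<^sub>m q = 0\<^sub>m p q"
    using c B by (intro eq_matI) (auto simp: scalar_prod_left_unit[of _ p])
  moreover have "C * ((- (1 / c)) \<cdot>\<^sub>m B) + D * 1\<^sub>m q = D - (1 / c) \<cdot>\<^sub>m (C * B)"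
    unfolding mult_smult_distrib[OF C B] using B C D by (intro eq_matI) auto
  ultimately have "M * R = four_block_mat (c \<cdot>\<^sub>m 1\<^sub>m p) (0\<^sub>m p q) C (D - (1 / c) \<cdot>\<^sub>m (C * B))"
    unfolding M_def R_def using B C D
    by (subst mult_four_block_mat[OF smult_carrier_mat[OF one_carrier_mat] B C D one_carrier_mat
        smult_carrier_mat[OF B] zero_carrier_mat one_carrier_mat]) simp
  moreover have "D - (1 / c) \<cdot>\<^sub>m (C * B) \<in> carrier_mat q q"
    using B C D by auto
  ultimately have "det M * det R = c ^ p * det (D - (1 / c) \<cdot>\<^sub>m (C * B))"
    using C by (simp add: det_mult[OF M R, symmetric] det_four_block_mat_upper_right_zero[of _ p _ q])
  moreover have "det R = 1"
    unfolding R_def using B by (subst det_four_block_mat_lower_left_zero[of _ p _ q]) auto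
  ultimately show ?thesis unfolding M_def by simp
qed

lemma isCont_det:
  fixes M :: "'a :: t2_space \<Rightarrow> 'b :: real_normed_field mat"
  assumes "\<And>w. M w \<in> carrier_mat N N"
    and "\<And>i k. i < N \<Longrightarrow> k < N \<Longrightarrow> isCont (\<lambda>w. M w $$ (i, k)) z"
  shows "isCont (\<lambda>w. det (M w)) z"
proof -
  have "isCont (\<lambda>w. \<Sum>p \<in> {p. p permutes {0..<N}}. signof p * (\<Prod>i = 0..<N. M w $$ (i, p i))) z"
  proof (intro continuous_intros)
    fix p i
    assume "p \<in> {p. p permutes {0..<N}}" and "i \<in> {0..<N}"
    then show "isCont (\<lambda>w. M w $$ (i, p i)) z"
      using assms(2) permutes_in_image[of p "{0..<N}" i] by auto
  qed
  then show ?thesis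
    using det_def'[OF assms(1)] by simp
qed

lemma continuous_agree_off_finite:
  fixes f g :: "'a :: {perfect_space, t2_space} \<Rightarrow> 'b :: t2_space"
  assumes "isCont f x" "isCont g x" "finite S" "\<And>y. y \<notin> S \<Longrightarrow> f y = g y"
  shows "f x = g x"
proof -
  have "eventually (\<lambda>y. \<forall>s\<in>S. y \<noteq> s) (at x)"
    using \<open>finite S\<close> by (intro eventually_ball_finite) (auto intro: eventually_neq_at_within)
  then have "eventually (\<lambda>y. f y = g y) (at x)"
    by (rule eventually_mono) (use assms(4) in blast)
  then have "(g \<longlongrightarrow> f x) (at x)"
    using assms(1) tendsto_cong unfolding isCont_def by blast
  then show ?thesis
    using assms(2) LIM_unique unfolding isCont_def by blast
qed

lemma A_op_carrier_mat:
  "T \<in> carrier_mat n n \<Longrightarrow> B \<in> carrier_mat p n \<Longrightarrow> A_op T B \<in> carrier_mat (p + n) (p + n)"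
  unfolding A_op_def by auto

lemma A_op_four_block:
  "T \<in> carrier_mat n n \<Longrightarrow> B \<in> carrier_mat p n \<Longrightarrow> A_op T B = four_block_mat (0\<^sub>m p p) B (0\<^sub>m n p) T"
  unfolding A_op_def by auto

lemma mat_adjoint_A_op:
  assumes T: "T \<in> carrier_mat n n" and B: "B \<in> carrier_mat p n"
  shows "mat_adjoint (A_op T B) = four_block_mat (0\<^sub>m p p) (0\<^sub>m p n) (mat_adjoint B) (mat_adjoint T)"
  unfolding A_op_four_block[OF T B] by (rule eq_matI) (use T B in auto)

lemma defect_A_op:
  assumes T: "T \<in> carrier_mat n n" and B: "B \<in> carrier_mat p n"
    and BB: "mat_adjoint B * B = defect T"
  shows "defect (A_op T B) = four_block_mat (1\<^sub>m p) (0\<^sub>m p n) (0\<^sub>m n p) (0\<^sub>m n n)"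
proof -
  have "mat_adjoint B * B + mat_adjoint T * T = 1\<^sub>m n"
    unfolding BB defect_def by (rule eq_matI) (use T in auto)
  then have "mat_adjoint (A_op T B) * A_op T B
      = four_block_mat (0\<^sub>m p p) (0\<^sub>m p n) (0\<^sub>m n p) (1\<^sub>m n)"
    unfolding mat_adjoint_A_op[OF T B] unfolding A_op_four_block[OF T B] using T B
    by (subst mult_four_block_mat[OF zero_carrier_mat zero_carrier_mat mat_adjoint_carrier_mat[OF B]
        mat_adjoint_carrier_mat[OF T] zero_carrier_mat B zero_carrier_mat T]) simp
  then have "defect (A_op T B) = 1\<^sub>m (p + n) - four_block_mat (0\<^sub>m p p) (0\<^sub>m p n) (0\<^sub>m n p) (1\<^sub>m n)"
    unfolding defect_def A_op_carrier_mat[OF T B, THEN carrier_matD(2)] by simp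
  also have "\<dots> = four_block_mat (1\<^sub>m p) (0\<^sub>m p n) (0\<^sub>m n p) (0\<^sub>m n n)"
    by (rule eq_matI) auto
  finally show ?thesis .
qed

lemma shifted_matrix_A_op_four_block:
  assumes T: "T \<in> carrier_mat n n" and B: "B \<in> carrier_mat p n"
  shows "z \<cdot>\<^sub>m 1\<^sub>m (p + n) - (2 * r) \<cdot>\<^sub>m herm_part (A_op T B) \<theta>
      - s \<cdot>\<^sub>m four_block_mat (1\<^sub>m p) (0\<^sub>m p n) (0\<^sub>m n p) (0\<^sub>m n n)
    = four_block_mat ((z - s) \<cdot>\<^sub>m 1\<^sub>m p) ((- (r * exp (- (\<i> * of_real \<theta>)))) \<cdot>\<^sub>m B)
        ((- (r * exp (\<i> * of_real \<theta>))) \<cdot>\<^sub>m mat_adjoint B) (z \<cdot>\<^sub>m 1\<^sub>m n - (2 * r) \<cdot>\<^sub>m herm_part T \<theta>)"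
  by (rule eq_matI) (use T B in \<open>auto simp: A_op_def herm_part_def algebra_simps\<close>)

definition shifted_det :: "complex mat \<Rightarrow> real \<Rightarrow> complex \<Rightarrow> complex \<Rightarrow> complex \<Rightarrow> complex" where
  "shifted_det X \<theta> r z s =
     det (z \<cdot>\<^sub>m 1\<^sub>m (dim_row X) - (2 * r) \<cdot>\<^sub>m herm_part X \<theta> - s \<cdot>\<^sub>m defect X)"

lemma shifted_det_A_op:
  assumes T: "T \<in> carrier_mat n n" and B: "B \<in> carrier_mat p n"
    and BB: "mat_adjoint B * B = defect T" and zs: "z \<noteq> s"
  shows "shifted_det (A_op T B) \<theta> r z s = (z - s) ^ p * shifted_det T \<theta> r z (r\<^sup>2 / (z - s))"
proof -
  define a where "a = r * exp (- (\<i> * of_real \<theta>))"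
  define a' where "a' = r * exp (\<i> * of_real \<theta>)"
  define H where "H = z \<cdot>\<^sub>m 1\<^sub>m n - (2 * r) \<cdot>\<^sub>m herm_part T \<theta>"
  have H: "H \<in> carrier_mat n n"
    unfolding H_def using T by (intro carrier_matI) simp_all
  have "a * a' = r\<^sup>2 * exp (- (\<i> * of_real \<theta>) + \<i> * of_real \<theta>)"
    unfolding a_def a'_def by (simp add: exp_add power2_eq_square mult_ac exp_minus_inverse)
  then have aa: "a * a' = r\<^sup>2"
    by simp
  have "(- a') \<cdot>\<^sub>m mat_adjoint B * ((- a) \<cdot>\<^sub>m B) = (- a) \<cdot>\<^sub>m ((- a') \<cdot>\<^sub>m (mat_adjoint B * B))"
    using B by (simp add: mult_smult_assoc_mat[of _ n p] mult_smult_distrib[of _ n p])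
  also have "\<dots> = r\<^sup>2 \<cdot>\<^sub>m defect T"
    unfolding BB by (rule eq_matI) (simp_all add: aa mult.assoc[symmetric])
  finally have product: "(- a') \<cdot>\<^sub>m mat_adjoint B * ((- a) \<cdot>\<^sub>m B) = r\<^sup>2 \<cdot>\<^sub>m defect T" .
  have "shifted_det (A_op T B) \<theta> r z s
      = det (four_block_mat ((z - s) \<cdot>\<^sub>m 1\<^sub>m p) ((- a) \<cdot>\<^sub>m B) ((- a') \<cdot>\<^sub>m mat_adjoint B) H)"
    unfolding shifted_det_def defect_A_op[OF T B BB] A_op_carrier_mat[OF T B, THEN carrier_matD(1)]
      shifted_matrix_A_op_four_block[OF T B] a_def a'_def H_def ..
  also have "\<dots> = (z - s) ^ p * det (H - (1 / (z - s)) \<cdot>\<^sub>m (r\<^sup>2 \<cdot>\<^sub>m defect T))"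
    unfolding product[symmetric] using zs B H by (intro det_four_block_mat_scalar_corner) simp_all
  also have "H - (1 / (z - s)) \<cdot>\<^sub>m (r\<^sup>2 \<cdot>\<^sub>m defect T)
      = z \<cdot>\<^sub>m 1\<^sub>m (dim_row T) - (2 * r) \<cdot>\<^sub>m herm_part T \<theta> - (r\<^sup>2 / (z - s)) \<cdot>\<^sub>m defect T"
    unfolding H_def using T defect_carrier_mat[OF T] by (intro eq_matI) simp_all
  finally show ?thesis
    unfolding shifted_det_def .
qed

lemma shifted_det_0:
  "X \<in> carrier_mat N N \<Longrightarrow> shifted_det X \<theta> r z 0 = det (z \<cdot>\<^sub>m 1\<^sub>m N - (2 * r) \<cdot>\<^sub>m herm_part X \<theta>)"
  unfolding shifted_det_def by (rule arg_cong[where f = det], rule eq_matI) auto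

lemma isCont_shifted_det:
  assumes X: "X \<in> carrier_mat N N" and f: "isCont f z"
  shows "isCont (\<lambda>w. shifted_det X \<theta> r w (f w)) z"
  unfolding shifted_det_def carrier_matD(1)[OF X]
proof (rule isCont_det)
  fix w
  show "w \<cdot>\<^sub>m 1\<^sub>m N - (2 * r) \<cdot>\<^sub>m herm_part X \<theta> - f w \<cdot>\<^sub>m defect X \<in> carrier_mat N N"
    using X by (intro carrier_matI) simp_all
next
  fix i k
  assume "i < N" "k < N"
  then have "(\<lambda>w. (w \<cdot>\<^sub>m 1\<^sub>m N - (2 * r) \<cdot>\<^sub>m herm_part X \<theta> - f w \<cdot>\<^sub>m defect X) $$ (i, k))
      = (\<lambda>w. w * of_bool (i = k) - (2 * r) * herm_part X \<theta> $$ (i, k) - f w * defect X $$ (i, k))"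
    using X defect_carrier_mat[OF X] by auto
  then show "isCont (\<lambda>w. (w \<cdot>\<^sub>m 1\<^sub>m N - (2 * r) \<cdot>\<^sub>m herm_part X \<theta> - f w \<cdot>\<^sub>m defect X) $$ (i, k)) z"
    using f by (simp add: continuous_intros)
qed

lemma shifted_det_scale:
  assumes "X \<in> carrier_mat N N"
  shows "shifted_det X \<theta> r (2 * r * u) (2 * r * c)
    = (2 * r) ^ N * det (u \<cdot>\<^sub>m 1\<^sub>m N - herm_part X \<theta> - c \<cdot>\<^sub>m defect X)"
proof -
  have "(2 * r * u) \<cdot>\<^sub>m 1\<^sub>m N - (2 * r) \<cdot>\<^sub>m herm_part X \<theta> - (2 * r * c) \<cdot>\<^sub>m defect X
      = (2 * r) \<cdot>\<^sub>m (u \<cdot>\<^sub>m 1\<^sub>m N - herm_part X \<theta> - c \<cdot>\<^sub>m defect X)"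
    using assms defect_carrier_mat[OF assms] by (intro eq_matI) (auto simp: algebra_simps)
  then show ?thesis
    unfolding shifted_det_def using assms defect_carrier_mat[OF assms] by simp
qed

fun cont_frac :: "complex \<Rightarrow> complex \<Rightarrow> nat \<Rightarrow> complex" where
  "cont_frac z r 0 = 0"
| "cont_frac z r (Suc m) = r\<^sup>2 / (z - cont_frac z r m)"

lemma z_minus_cont_frac:
  assumes "\<forall>i\<le>m. phi i z r \<noteq> 0"
  shows "z - cont_frac z r m = phi (Suc m) z r / phi m z r"
  using assms
proof (induction m)
  case 0
  then show ?case by simp
next
  case (Suc m)
  then have "z - cont_frac z r m = phi (Suc m) z r / phi m z r"
    by simp
  then have "z - cont_frac z r (Suc m) = z - r\<^sup>2 * phi m z r / phi (Suc m) z r"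
    by simp
  also have "\<dots> = phi (Suc (Suc m)) z r / phi (Suc m) z r"
    using Suc.prems by (simp add: field_simps)
  finally show ?case .
qed

lemma prod_z_minus_cont_frac:
  assumes "\<forall>i\<le>m. phi i z r \<noteq> 0"
  shows "(\<Prod>i<m. z - cont_frac z r i) = phi m z r"
  using assms
proof (induction m)
  case 0
  then show ?case by simp
next
  case (Suc m)
  then show ?case
    by (simp add: z_minus_cont_frac)
qed

lemma cont_frac_Suc_phi:
  assumes "\<forall>i\<le>m. phi i z r \<noteq> 0"
  shows "cont_frac z r (Suc m) = r\<^sup>2 * phi m z r / phi (Suc m) z r"
  using z_minus_cont_frac[OF assms] by simp

fun phi_poly :: "complex \<Rightarrow> nat \<Rightarrow> complex poly" where
  "phi_poly r 0 = 1"
| "phi_poly r (Suc 0) = [:0, 1:]"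
| "phi_poly r (Suc (Suc m)) = pCons 0 (phi_poly r (Suc m)) - smult (r\<^sup>2) (phi_poly r m)"

lemma poly_phi_poly: "poly (phi_poly r m) z = phi m z r"
  by (induction r m rule: phi_poly.induct) auto

lemma degree_coeff_phi_poly: "degree (phi_poly r m) \<le> m \<and> coeff (phi_poly r m) m = 1"
proof (induction r m rule: phi_poly.induct)
  case (3 r m)
  have "degree (pCons 0 (phi_poly r (Suc m))) \<le> Suc (Suc m)"
    using 3(1) by (simp add: degree_pCons_le le_trans)
  moreover have "degree (smult (r\<^sup>2) (phi_poly r m)) \<le> Suc (Suc m)"
    using 3(2) degree_smult_le[of "r\<^sup>2" "phi_poly r m"] by linarith
  ultimately have "degree (pCons 0 (phi_poly r (Suc m)) - smult (r\<^sup>2) (phi_poly r m)) \<le> Suc (Suc m)"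
    by (rule degree_diff_le)
  moreover have "coeff (phi_poly r m) (Suc (Suc m)) = 0"
    using 3(2) by (intro coeff_eq_0) linarith
  ultimately show ?case
    using 3(1) by simp
qed simp_all

lemma finite_phi_zeros: "finite {z. \<exists>i\<le>j. phi i z r = 0}"
proof -
  have "phi_poly r i \<noteq> 0" for i
    using degree_coeff_phi_poly[of r i] by auto
  moreover have "{z. \<exists>i\<le>j. phi i z r = 0} = (\<Union>i\<le>j. {z. poly (phi_poly r i) z = 0})"
    by (auto simp: poly_phi_poly)
  ultimately show ?thesis
    by (simp add: poly_roots_finite)
qed

lemma isCont_phi: "isCont (\<lambda>z. phi m z r) z0"
  by (induction m z0 r rule: phi.induct) (auto intro!: continuous_intros)

lemma phi_chebU: "phi m (2 * r * u) r = r ^ m * chebU m u"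
  by (induction m u rule: chebU.induct) (auto simp: algebra_simps power2_eq_square)

context
  fixes n d :: nat and C :: "complex mat" and T :: "nat \<Rightarrow> complex mat"
  assumes C: "C \<in> carrier_mat n n" and tower: "is_tower C T" and d: "d = mrank (defect C)"
begin

lemma tower_step:
  obtains B where "B \<in> carrier_mat (mrank (defect (T k))) (dim_col (T k))"
    and "mat_adjoint B * B = defect (T k)" and "T (Suc k) = A_op (T k) B"
  using tower unfolding is_tower_def is_B_def by blast

lemma tower_carrier_mat_mrank_defect:
  "T k \<in> carrier_mat (n + k * d) (n + k * d) \<and> mrank (defect (T k)) = d"
proof (induction k)
  case 0
  then show ?case
    using C d tower unfolding is_tower_def by simp
next
  case (Suc k)
  then have Tk: "T k \<in> carrier_mat (n + k * d) (n + k * d)" and rank: "mrank (defect (T k)) = d"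
    by blast+
  obtain B where B: "B \<in> carrier_mat d (n + k * d)" and BB: "mat_adjoint B * B = defect (T k)"
    and step: "T (Suc k) = A_op (T k) B"
    using tower_step[of k] Tk rank by (metis carrier_matD(2))
  have "T (Suc k) \<in> carrier_mat (d + (n + k * d)) (d + (n + k * d))"
    unfolding step by (rule A_op_carrier_mat[OF Tk B])
  moreover have "mrank (defect (T (Suc k))) = d"
    unfolding step defect_A_op[OF Tk B BB] by (rule mrank_four_block_one_zero)
  ultimately show ?case
    by (simp add: ac_simps)
qed

lemma shifted_det_tower_Suc:
  assumes "z \<noteq> s"
  shows "shifted_det (T (Suc k)) \<theta> r z s = (z - s) ^ d * shifted_det (T k) \<theta> r z (r\<^sup>2 / (z - s))"
proof -
  have Tk: "T k \<in> carrier_mat (n + k * d) (n + k * d)" and "mrank (defect (T k)) = d"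
    using tower_carrier_mat_mrank_defect by blast+
  then obtain B where B: "B \<in> carrier_mat d (n + k * d)" and BB: "mat_adjoint B * B = defect (T k)"
    and step: "T (Suc k) = A_op (T k) B"
    using tower_step[of k] by (metis carrier_matD(2))
  show ?thesis
    unfolding step by (rule shifted_det_A_op[OF Tk B BB assms])
qed

lemma shifted_det_tower_cont_frac:
  assumes "\<forall>i<k. z \<noteq> cont_frac z r (m + i)"
  shows "shifted_det (T k) \<theta> r z (cont_frac z r m)
    = (\<Prod>i<k. z - cont_frac z r (m + i)) ^ d * shifted_det C \<theta> r z (cont_frac z r (m + k))"
  using assms
proof (induction k arbitrary: m)
  case 0
  then show ?case
    using tower unfolding is_tower_def by simp
next
  case (Suc k)
  have "shifted_det (T (Suc k)) \<theta> r z (cont_frac z r m)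
      = (z - cont_frac z r m) ^ d * shifted_det (T k) \<theta> r z (cont_frac z r (Suc m))"
    using Suc.prems shifted_det_tower_Suc[of z "cont_frac z r m"] by auto
  also have "shifted_det (T k) \<theta> r z (cont_frac z r (Suc m))
      = (\<Prod>i<k. z - cont_frac z r (Suc m + i)) ^ d * shifted_det C \<theta> r z (cont_frac z r (Suc m + k))"
    using Suc.prems by (intro Suc.IH) auto
  finally show ?case
    by (simp add: prod.lessThan_Suc_shift power_mult_distrib del: prod.lessThan_Suc cont_frac.simps)
qed

lemma shifted_det_tower_phi_all_nonzero:
  assumes "\<forall>i\<le>Suc j. phi i z r \<noteq> 0"
  shows "shifted_det (T (Suc j)) \<theta> r z 0
    = phi (Suc j) z r ^ d * shifted_det C \<theta> r z (r\<^sup>2 * phi j z r / phi (Suc j) z r)"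
proof -
  have "z \<noteq> cont_frac z r i" if "i < Suc j" for i
  proof -
    have "z - cont_frac z r i = phi (Suc i) z r / phi i z r"
      using assms that by (intro z_minus_cont_frac) auto
    moreover have "phi (Suc i) z r \<noteq> 0" and "phi i z r \<noteq> 0"
      using assms that by auto
    ultimately show ?thesis
      by auto
  qed
  then show ?thesis
    using shifted_det_tower_cont_frac[of "Suc j" z r 0 \<theta>] prod_z_minus_cont_frac[OF assms]
      cont_frac_Suc_phi[of j z r] assms by simp
qed

lemma shifted_det_tower_phi:
  assumes "phi (Suc j) z r \<noteq> 0"
  shows "shifted_det (T (Suc j)) \<theta> r z 0
    = phi (Suc j) z r ^ d * shifted_det C \<theta> r z (r\<^sup>2 * phi j z r / phi (Suc j) z r)"
proof -
  let ?L = "\<lambda>w. shifted_det (T (Suc j)) \<theta> r w 0"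
  let ?R = "\<lambda>w. phi (Suc j) w r ^ d * shifted_det C \<theta> r w (r\<^sup>2 * phi j w r / phi (Suc j) w r)"
  have "T (Suc j) \<in> carrier_mat (n + Suc j * d) (n + Suc j * d)"
    using tower_carrier_mat_mrank_defect by blast
  then have L: "isCont ?L z"
    by (rule isCont_shifted_det) simp
  have "isCont (\<lambda>w. r\<^sup>2 * phi j w r / phi (Suc j) w r) z"
    using assms by (intro continuous_intros isCont_phi)
  then have "isCont (\<lambda>w. shifted_det C \<theta> r w (r\<^sup>2 * phi j w r / phi (Suc j) w r)) z"
    by (rule isCont_shifted_det[OF C])
  then have R: "isCont ?R z"
    by (rule continuous_mult[OF continuous_power[OF isCont_phi]])
  have "?L w = ?R w" if "w \<notin> {w. \<exists>i\<le>Suc j. phi i w r = 0}" for w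
    using that by (intro shifted_det_tower_phi_all_nonzero) auto
  with L R show ?thesis
    by (rule continuous_agree_off_finite[OF _ _ finite_phi_zeros])
qed

lemma shifted_det_tower_chebU:
  assumes "r \<noteq> 0" and "chebU (Suc j) u \<noteq> 0"
  shows "shifted_det (T (Suc j)) \<theta> r (2 * r * u) 0
    = (2 * r) ^ n * r ^ (Suc j * d) * chebU (Suc j) u ^ d
      * det (u \<cdot>\<^sub>m 1\<^sub>m n - herm_part C \<theta> - (chebU j u / (2 * chebU (Suc j) u)) \<cdot>\<^sub>m defect C)"
proof -
  define c where "c = chebU j u / (2 * chebU (Suc j) u)"
  have "phi (Suc j) (2 * r * u) r \<noteq> 0"
    using assms by (simp add: phi_chebU)
  moreover have shift: "r\<^sup>2 * phi j (2 * r * u) r / phi (Suc j) (2 * r * u) r = 2 * r * c"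
    using assms unfolding c_def by (simp add: phi_chebU power2_eq_square)
  ultimately have "shifted_det (T (Suc j)) \<theta> r (2 * r * u) 0
      = phi (Suc j) (2 * r * u) r ^ d * shifted_det C \<theta> r (2 * r * u) (2 * r * c)"
    by (subst shifted_det_tower_phi) (simp_all add: shift)
  also have "\<dots> = (r ^ Suc j * chebU (Suc j) u) ^ d
      * ((2 * r) ^ n * det (u \<cdot>\<^sub>m 1\<^sub>m n - herm_part C \<theta> - c \<cdot>\<^sub>m defect C))"
    unfolding phi_chebU shifted_det_scale[OF C] ..
  finally show ?thesis
    unfolding c_def by (simp add: power_mult_distrib power_add mult_ac flip: power_mult)
qed

end

theorem mainTheorem3:
  fixes n :: nat and C :: "complex mat" and T :: "nat \<Rightarrow> complex mat"
  assumes "contraction n C"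
    and "is_tower C T"
    and "d = mrank (defect C)"
    and "j \<ge> 1"
  shows "(\<forall>(\<theta>::real) (z::complex) (r::complex). phi j z r \<noteq> 0 \<longrightarrow>
           det (z \<cdot>\<^sub>m 1\<^sub>m (dim_row (T j)) - (2 * r) \<cdot>\<^sub>m herm_part (T j) \<theta>)
           = phi j z r ^ d *
             det (z \<cdot>\<^sub>m 1\<^sub>m n - (2 * r) \<cdot>\<^sub>m herm_part C \<theta>
                  - (r^2 * phi (j - 1) z r / phi j z r) \<cdot>\<^sub>m defect C))
       \<and> (\<forall>(\<theta>::real) (u::complex) (r::complex). r \<noteq> 0 \<longrightarrow> chebU j u \<noteq> 0 \<longrightarrow>
           det ((2 * r * u) \<cdot>\<^sub>m 1\<^sub>m (dim_row (T j)) - (2 * r) \<cdot>\<^sub>m herm_part (T j) \<theta>)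
           = (2 * r) ^ n * r ^ (j * d) * chebU j u ^ d *
             det (u \<cdot>\<^sub>m 1\<^sub>m n - herm_part C \<theta>
                  - (chebU (j - 1) u / (2 * chebU j u)) \<cdot>\<^sub>m defect C))"
proof -
  have C: "C \<in> carrier_mat n n"
    using assms(1) unfolding contraction_def by blast
  obtain k where j: "j = Suc k"
    using assms(4) by (cases j) auto
  have "T (Suc k) \<in> carrier_mat (n + Suc k * d) (n + Suc k * d)"
    using tower_carrier_mat_mrank_defect[OF C assms(2,3)] by blast
  then have L: "det (z \<cdot>\<^sub>m 1\<^sub>m (dim_row (T (Suc k))) - (2 * r) \<cdot>\<^sub>m herm_part (T (Suc k)) \<theta>)
      = shifted_det (T (Suc k)) \<theta> r z 0" for \<theta> z r
    by (simp add: shifted_det_0)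
  have R: "det (z \<cdot>\<^sub>m 1\<^sub>m n - (2 * r) \<cdot>\<^sub>m herm_part C \<theta> - s \<cdot>\<^sub>m defect C) = shifted_det C \<theta> r z s"
    for \<theta> z r s
    using C by (simp add: shifted_det_def)
  show ?thesis
    unfolding j diff_Suc_1 L R
    using shifted_det_tower_phi[OF C assms(2,3)] shifted_det_tower_chebU[OF C assms(2,3)] by blast
qed

end
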